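(* Consider the parametrized elliptic PDE $\mathcal{L}(u(\mathbf{P}),\mathbf{P})=f(\mathbf{P})$ with parameters $\mathbf{P}\in\mathcal{P}\subset\mathbb{R}^{N_P}$, unique solution $u(\mathbf{P})$ and quantity of interest $q(\mathbf{P})=Q(u(\mathbf{P}))$. Let $J_1:\mathcal{P}\to\mathbb{R}$ be a cost function and $G_1^{(j)}(\mathbf{P},q(\mathbf{P}))$, $j=1,\dots,N_G$, constraint functions. Let $D=\mathrm{diag}(D_{11},\dots,D_{N_PN_P})$ be the positive diagonal scaling matrix of the uncertainty set, with all diagonal entries equal. Let $\boldsymbol{\Delta}'=(\Delta_1',\dots,\Delta_{N_P}')$ be a random perturbation with $\mathbb{E}[\Delta_i']=0$, and write $\mathbf{P}=\overline{\mathbf{P}}+\boldsymbol{\Delta}'$. Assume: (i) $Q$ is linear in $u$, i.e. $\partial Q/\partial u$ is constant; (ii) the perturbations $\Delta_i'$ are independent and identically distributed, and each $\Delta_i'$ is symmetric around $0$. Choose $\lambda=D_{ii}/\mathrm{std}[\Delta_i']$; by the equal-diagonal assumption on $D$ and (ii), this value does not depend on $i$. Then the following two problems are equivalent. Linearized stochastic robust problem: $$\min_{\overline{\mathbf{P}}\in\overline{\mathcal{P}}_2}\; J_1(\overline{\mathbf{P}})+\lambda\,\big\|\mathrm{std}[\boldsymbol{\Delta}']\circ\nabla_{\overline{\mathbf{P}}}J_1(\overline{\mathbf{P}})\big\|_2$$ subject to $$G_1^{(j)}(\overline{\mathbf{P}},q(\overline{\mathbf{P}}))+\lambda\,\big\|\mathrm{std}[\boldsymbol{\Delta}']\circ\nabla_{\overline{\mathbf{P}}}G_1^{(j)}(\overline{\mathbf{P}},q(\overline{\mathbf{P}}))\big\|_2\le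 0,\qquad j=1,\dots,N_G.$$ Linearized worst-case robust problem with the 2-norm: $$\min_{\overline{\mathbf{P}}\in\overline{\mathcal{P}}_2}\; J_1(\overline{\mathbf{P}})+\big\|D\,\nabla_{\overline{\mathbf{P}}}J_1(\overline{\mathbf{P}})\big\|_2$$ subject to $$G_1^{(j)}(\overline{\mathbf{P}},q(\overline{\mathbf{P}}))+\big\|D\,\nabla_{\overline{\mathbf{P}}}G_1^{(j)}(\overline{\mathbf{P}},q(\overline{\mathbf{P}}))\big\|_2\le 0,\qquad j=1,\dots,N_G.$$
   Context: Notation and definitions used in the statement: - $\mathcal{P}\subset\mathbb{R}^{N_P}$ is a bounded parameter domain. - $\mathcal{L}$ is an elliptic operator, e.g. $\mathcal{L}(u,\mathbf{P})=\mathrm{div}(a(u,\mathbf{P})\nabla u)$, posed on a bounded domain with Dirichlet boundary conditions. - $Q$ is a linear functional of the solution $u$. - The gradients $\nabla_{\overline{\mathbf{P}}}$ are total derivatives with respect to the parameters, taken through the dependence $u=u(\mathbf{P})$. - $\mathrm{std}[\boldsymbol{\Delta}']=(\mathrm{std}[\Delta_1'],\dots,\mathrm{std}[\Delta_{N_P}'])$ is the vector of standard deviations, and $\circ$ denotes the componentwise (Hadamard) product. - The uncertainty set in the 2-norm is $\mathcal{U}_2=\{\boldsymbol{\Delta}\in\mathbb{R}^{N_P}:\|D^{-1}\boldsymbol{\Delta}\|_2\le 1\}$. - The reduced parameter space is $\overline{\mathcal{P}}_2=\{\mathbf{P}\in\mathcal{P}:\mathbf{P}+\boldsymbol{\Delta}\in\mathcal{P}\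 \text{for all}\ \boldsymbol{\Delta}\in\mathcal{U}_2\}$. Origin of the two problems: - The stochastic problem comes from $\min\ \mathbb{E}[J_1]+\lambda\,\mathrm{std}[J_1]$ subject to $\mathbb{E}[G_1^{(j)}]+\lambda\,\mathrm{std}[G_1^{(j)}]\le0$, after a first-order Taylor linearization in $\boldsymbol{\Delta}'$. - The worst-case problem comes from $\min_{\overline{\mathbf{P}}}\max_{\boldsymbol{\Delta}\in\mathcal{U}_2}J_1(\overline{\mathbf{P}}+\boldsymbol{\Delta})$ subject to $\max_{\boldsymbol{\Delta}\in\mathcal{U}_2}G_1^{(j)}\le0$, after first-order linearization. *)

theory Defs
  imports "HOL-Analysis.Analysis" "HOL-Probability.Probability"
begin

definition grad :: "(real^'n \<Rightarrow> real) \<Rightarrow> real^'n \<Rightarrow> real^'n" where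
  "grad f x = (SOME g. GDERIV f x :> g)"

definition std_dev :: "'a measure \<Rightarrow> ('a \<Rightarrow> real) \<Rightarrow> real" where
  "std_dev M X = sqrt (\<integral>\<omega>. (X \<omega> - (\<integral>\<omega>'. X \<omega>' \<partial>M))\<^sup>2 \<partial>M)"

definition hadamard :: "real^'n \<Rightarrow> real^'n \<Rightarrow> real^'n" where
  "hadamard a b = (\<chi> i. a $ i * b $ i)"

definition unc_set2 :: "real^'n^'n \<Rightarrow> (real^'n) set" where
  "unc_set2 D = {\<Delta>. norm (matrix_inv D *v \<Delta>) \<le> 1}"

definition reduced_space2 :: "(real^'n) set \<Rightarrow> real^'n^'n \<Rightarrow> (real^'n) set" where
  "reduced_space2 PS D = {P \<in> PS. \<forall>\<Delta> \<in> unc_set2 D. P + \<Delta> \<in> PS}"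

definition opt_feasible :: "'b set \<Rightarrow> nat \<Rightarrow> (nat \<Rightarrow> 'b \<Rightarrow> real) \<Rightarrow> 'b set" where
  "opt_feasible S NG cons = {x \<in> S. \<forall>j \<in> {1..NG}. cons j x \<le> 0}"

definition opt_argmin ::
  "'b set \<Rightarrow> ('b \<Rightarrow> real) \<Rightarrow> nat \<Rightarrow> (nat \<Rightarrow> 'b \<Rightarrow> real) \<Rightarrow> 'b set" where
  "opt_argmin S obj NG cons =
     {x \<in> opt_feasible S NG cons. \<forall>y \<in> opt_feasible S NG cons. obj x \<le> obj y}"

end

theory Submission
  imports Defs
begin

text \<open>For i.i.d. perturbations every component has the same standard deviation s, and an
  equal-diagonal D is the scalar matrix d I. Hence the stochastic penalty
  \<open>(d/s) \<parallel>s g\<parallel>\<close> and the worst-case penalty \<open>\<parallel>D g\<parallel>\<close> coincide for every gradient g, so the two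
  problems have literally the same objective and the same constraint functions. Independence,
  symmetry, zero mean and the linearity of Q are needed only to justify the linearization, not
  for the equivalence of the linearized problems.\<close>

lemma std_dev_distr:
  assumes "X \<in> borel_measurable M"
  shows "std_dev M X =
    sqrt (\<integral>x. (x - (\<integral>y. y \<partial>distr M borel X))\<^sup>2 \<partial>distr M borel X)"
  unfolding std_dev_def by (subst (1 2) integral_distr[OF assms]) auto

lemma std_dev_eq_if_distr_eq:
  assumes "X \<in> borel_measurable M" "Y \<in> borel_measurable M"
    and "distr M borel X = distr M borel Y"
  shows "std_dev M X = std_dev M Y"
  using assms by (simp add: std_dev_distr)

lemma hadamard_const_left:
  assumes "\<And>i. a $ i = c"
  shows "hadamard a g = c *\<^sub>R g"
  using assms by (simp add: hadamard_def vec_eq_iff)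

lemma matrix_vector_mult_scalar_diag:
  fixes D :: "'a::comm_ring_1^'n^'n"
  assumes "\<And>i k. i \<noteq> k \<Longrightarrow> D $ i $ k = 0" and "\<And>i. D $ i $ i = d"
  shows "D *v g = (\<chi> i. d * g $ i)"
proof -
  have "(\<Sum>k\<in>UNIV. D $ i $ k * g $ k) = d * g $ i" for i
    by (subst sum.remove[of _ i]) (auto simp: assms)
  then show ?thesis by (simp add: matrix_vector_mult_def vec_eq_iff)
qed

lemma scalar_diag_norm_eq_scaled_norm:
  fixes D :: "real^'n^'n"
  assumes "\<And>i k. i \<noteq> k \<Longrightarrow> D $ i $ k = 0" and "\<And>i. D $ i $ i = d"
    and "d > 0" and "s > 0"
  shows "d / s * norm (s *\<^sub>R g) = norm (D *v g)"
proof -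
  have "D *v g = d *\<^sub>R g"
    using matrix_vector_mult_scalar_diag[OF assms(1,2)] by (simp add: vec_eq_iff)
  then show ?thesis using assms(3,4) by simp
qed

theorem theorem1:
  fixes PS :: "(real^'n) set"                 \<comment> \<open>parameter domain\<close>
    and sol :: "real^'n \<Rightarrow> 'v::real_normed_vector"  \<comment> \<open>solution map P \<mapsto> u(P)\<close>
    and Q :: "'v \<Rightarrow> real"                     \<comment> \<open>quantity of interest functional\<close>
    and J1 :: "real^'n \<Rightarrow> real"
    and G :: "nat \<Rightarrow> real^'n \<Rightarrow> real \<Rightarrow> real"
    and NG :: nat
    and D :: "real^'n^'n"
    and M :: "'a measure"
    and \<Delta> :: "'n \<Rightarrow> 'a \<Rightarrow> real"
    and i0 :: 'n
    and lam :: real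
  defines "q \<equiv> (\<lambda>P. Q (sol P))"
      and "Pbar \<equiv> reduced_space2 PS D"
      and "sd \<equiv> (\<chi> i. std_dev M (\<Delta> i))"
  assumes bounded_PS: "bounded PS"
    and Q_linear: "bounded_linear Q"
    and J1_diff: "\<forall>P \<in> Pbar. \<exists>g. GDERIV J1 P :> g"
    and G_diff: "\<forall>j \<in> {1..NG}. \<forall>P \<in> Pbar. \<exists>g. GDERIV (\<lambda>P'. G j P' (q P')) P :> g"
    and D_diag: "\<forall>i k. i \<noteq> k \<longrightarrow> D $ i $ k = 0"
    and D_pos: "\<forall>i. D $ i $ i > 0"
    and D_equal: "\<forall>i k. D $ i $ i = D $ k $ k"
    and M_prob: "prob_space M"
    and indep: "prob_space.indep_vars M (\<lambda>_. borel) \<Delta> UNIV"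
    and ident: "\<forall>i k. distr M borel (\<Delta> i) = distr M borel (\<Delta> k)"
    and symm: "\<forall>i. distr M borel (\<Delta> i) = distr M borel (\<lambda>\<omega>. - \<Delta> i \<omega>)"
    and integr: "\<forall>i. integrable M (\<Delta> i)"
    and mean0: "\<forall>i. (\<integral>\<omega>. \<Delta> i \<omega> \<partial>M) = 0"
    and sq_integr: "\<forall>i. integrable M (\<lambda>\<omega>. (\<Delta> i \<omega>)\<^sup>2)"
    and std_pos: "\<forall>i. std_dev M (\<Delta> i) > 0"
    and lambda_def: "lam = D $ i0 $ i0 / std_dev M (\<Delta> i0)"
  shows
    "let objS = (\<lambda>P. J1 P + lam * norm (hadamard sd (grad J1 P)));
         conS = (\<lambda>j P. G j P (q P) + lam * norm (hadamard sd (grad (\<lambda>P'. G j P' (q P')) P)));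
         objW = (\<lambda>P. J1 P + norm (D *v grad J1 P));
         conW = (\<lambda>j P. G j P (q P) + norm (D *v grad (\<lambda>P'. G j P' (q P')) P))
     in (\<forall>P \<in> Pbar. objS P = objW P)
      \<and> opt_feasible Pbar NG conS = opt_feasible Pbar NG conW
      \<and> opt_argmin Pbar objS NG conS = opt_argmin Pbar objW NG conW"
proof -
  have sd_const: "sd $ i = std_dev M (\<Delta> i0)" for i
    unfolding sd_def using integr ident by (auto intro: std_dev_eq_if_distr_eq)
  have penalty_eq: "lam * norm (hadamard sd g) = norm (D *v g)" for g
    unfolding lambda_def hadamard_const_left[OF sd_const]
    using D_diag D_equal D_pos std_pos
    by (intro scalar_diag_norm_eq_scaled_norm) auto
  show ?thesis unfolding Let_def by (simp add: penalty_eq)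
qed

end
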